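(* Let $q=3^m$ with $m\ge1$. Then $\#\{x\in\mathbb{F}_q^*:\ x,\,x+1,\,x-1\in C_0\}\le \frac{q+2\sqrt{q}+9}{8}$.
   Context: $C_0$ denotes the set of nonzero squares in $\mathbb{F}_q^*$. *)

theory Defs
  imports Complex_Main
begin

definition nonzero_squares :: "'a::field set" where
  "nonzero_squares = {x. x \<noteq> 0 \<and> (\<exists>y. y ^ 2 = x)}"

end

theory Submission
  imports Defs
begin

(* Write chi for the quadratic character, q = 3^m, and N for the set of x with x, x + 1 and x - 1
   nonzero squares. The product (1 + chi x) (1 + chi (x + 1)) (1 + chi (x - 1)) is nonnegative and
   equals 8 on N. Summed over the field, its linear terms vanish, each of the three terms
   chi u chi (u + d) with d <> 0 sums to -1, and the triple product is chi (x^3 - x); hence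
   8 |N| <= q - 3 + sum_x chi (x^3 - x).
   In characteristic 3 the map x |-> x^3 - x is additive with fibres x + F_3, so its image H is an
   additive subgroup of index 3 and sum_x chi (x^3 - x) = 3 s - q with s = |{y. y^2 : H}|.
   The numbers of y with y^2 in each of the three cosets of H sum to q, and their squares sum to
   q + (q - 1) q / 3; this second moment forces |3 s - q| <= 2 sqrt q. So 8 |N| <= q - 3 + 2 sqrt q,
   slightly better than claimed. *)

lemma self_eq_minus_iff:
  assumes "(2::'a::field) \<noteq> 0"
  shows "x = - x \<longleftrightarrow> (x::'a) = 0"
proof
  assume "x = - x"
  then have "2 * x = 0" by (metis add.right_inverse mult_2)
  with assms show "x = 0" by simp
qed simp

lemma sum_UNIV_translate:
  fixes f :: "'a::{ab_group_add,finite} \<Rightarrow> 'b::comm_monoid_add"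
  shows "(\<Sum>x\<in>UNIV. f (x + a)) = (\<Sum>x\<in>UNIV. f x)"
  by (rule sum.reindex_bij_witness[of _ "\<lambda>x. x - a" "\<lambda>x. x + a"]) auto

lemma of_nat_card_UNIV_eq_0: "of_nat (card (UNIV :: 'a::{ring_1,finite} set)) = (0::'a)"
proof -
  have "(\<Sum>x\<in>UNIV. x + 1) = (\<Sum>x\<in>(UNIV :: 'a set). x)"
    by (rule sum_UNIV_translate)
  then show ?thesis by (simp add: sum.distrib)
qed

lemma card_eq_sum_card_fibers:
  fixes f :: "'a::finite \<Rightarrow> 'b"
  assumes "finite B"
  shows "card {y. f y \<in> B} = (\<Sum>b\<in>B. card {y. f y = b})"
proof -
  have "card {y. f y \<in> B} = card (\<Union>b\<in>B. {y. f y = b})"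
    by (rule arg_cong[where f = card]) blast
  also have "\<dots> = (\<Sum>b\<in>B. card {y. f y = b})"
    by (rule card_UN_disjoint) (use assms in auto)
  finally show ?thesis .
qed

lemma sum_comp_eq_card_fiber_mult:
  fixes f :: "'a::finite \<Rightarrow> 'b" and g :: "'b \<Rightarrow> 'c::comm_semiring_1"
  assumes "\<And>x. card {y. f y = f x} = k"
  shows "(\<Sum>x\<in>UNIV. g (f x)) = of_nat k * (\<Sum>b\<in>range f. g b)"
proof -
  have "(\<Sum>x\<in>UNIV. g (f x)) = (\<Sum>b\<in>range f. \<Sum>x\<in>{x \<in> UNIV. f x = b}. g (f x))"
    by (rule sum.image_gen) simp
  also have "\<dots> = (\<Sum>b\<in>range f. of_nat k * g b)"
  proof (rule sum.cong[OF refl])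
    fix b assume "b \<in> range f"
    then obtain x where "b = f x" by blast
    then have "(\<Sum>y\<in>{y \<in> UNIV. f y = b}. g (f y)) = (\<Sum>y\<in>{y. f y = f x}. g b)"
      by (intro sum.cong) auto
    also have "\<dots> = of_nat k * g b" using assms[of x] by simp
    finally show "(\<Sum>y\<in>{y \<in> UNIV. f y = b}. g (f y)) = of_nat k * g b" .
  qed
  finally show ?thesis by (simp add: sum_distrib_left)
qed

lemma card_eq_card_fiber_mult:
  fixes f :: "'a::finite \<Rightarrow> 'b"
  assumes "\<And>x. card {y. f y = f x} = k"
  shows "card (UNIV :: 'a set) = k * card (range f)"
  using sum_comp_eq_card_fiber_mult[of f k "\<lambda>_. 1::nat", OF assms] by simp

lemma card_pairs_same_image:
  fixes f :: "'a::finite \<Rightarrow> 'b"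
  assumes "finite B" "range f \<subseteq> B"
  shows "card {(y, z). f y = f z} = (\<Sum>b\<in>B. card {y. f y = b} ^ 2)"
proof -
  have "{(y, z). f y = f z} = (SIGMA y:UNIV. {z. f z = f y})" by auto
  then have "card {(y, z). f y = f z} = (\<Sum>y\<in>UNIV. card {z. f z = f y})" by simp
  also have "\<dots> = (\<Sum>b\<in>B. \<Sum>y\<in>{y \<in> UNIV. f y = b}. card {z. f z = f y})"
    by (rule sum.group[symmetric]) (use assms in auto)
  also have "\<dots> = (\<Sum>b\<in>B. \<Sum>y\<in>{y. f y = b}. card {z. f z = b})"
    by (intro sum.cong) auto
  also have "\<dots> = (\<Sum>b\<in>B. card {y. f y = b} ^ 2)"
    by (simp add: power2_eq_square)
  finally show ?thesis .
qed

section \<open>The quadratic character\<close>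

lemma mult_mem_nonzero_squares:
  "a \<in> nonzero_squares \<Longrightarrow> b \<in> nonzero_squares \<Longrightarrow> a * b \<in> nonzero_squares"
  unfolding nonzero_squares_def by (auto simp: power_mult_distrib[symmetric])

lemma inverse_mem_nonzero_squares:
  "a \<in> nonzero_squares \<Longrightarrow> inverse a \<in> nonzero_squares"
  unfolding nonzero_squares_def by (auto simp: power_inverse[symmetric])

lemma mult_mem_nonzero_squares_iff:
  assumes "a \<in> nonzero_squares"
  shows "a * b \<in> nonzero_squares \<longleftrightarrow> b \<in> nonzero_squares"
proof
  assume "a * b \<in> nonzero_squares"
  then have "inverse a * (a * b) \<in> nonzero_squares"
    using assms by (simp add: mult_mem_nonzero_squares inverse_mem_nonzero_squares)
  with assms show "b \<in> nonzero_squares"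
    by (simp add: nonzero_squares_def mult.assoc[symmetric])
qed (use assms mult_mem_nonzero_squares in blast)

lemma square_mem_nonzero_squares: "a \<noteq> 0 \<Longrightarrow> a ^ 2 \<in> nonzero_squares"
  unfolding nonzero_squares_def by auto

definition quad_char :: "'a::field \<Rightarrow> int" where
  "quad_char x = (if x = 0 then 0 else if x \<in> nonzero_squares then 1 else -1)"

lemma card_square_roots:
  fixes a :: "'a::{field,finite}"
  assumes "(2::'a) \<noteq> 0"
  shows "int (card {y. y ^ 2 = a}) = 1 + quad_char a"
proof (cases "a \<in> nonzero_squares")
  case True
  then obtain y where y: "y ^ 2 = a" "y \<noteq> 0" by (auto simp: nonzero_squares_def)
  then have "{z. z ^ 2 = a} = {y, - y}" by (auto simp: power2_eq_iff)
  moreover have "y \<noteq> - y" using y(2) self_eq_minus_iff[OF assms] by blast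
  ultimately show ?thesis using True by (simp add: quad_char_def nonzero_squares_def)
next
  case False
  then have "{z. z ^ 2 = a} = (if a = 0 then {0} else {})" by (auto simp: nonzero_squares_def)
  with False show ?thesis by (simp add: quad_char_def)
qed

lemma sum_quad_char_eq:
  fixes B :: "'a::{field,finite} set"
  assumes "(2::'a) \<noteq> 0"
  shows "(\<Sum>b\<in>B. quad_char b) = int (card {y. y ^ 2 \<in> B}) - int (card B)"
proof -
  have "int (card {y. y ^ 2 \<in> B}) = (\<Sum>b\<in>B. int (card {y. y ^ 2 = b}))"
    by (simp add: card_eq_sum_card_fibers)
  also have "\<dots> = (\<Sum>b\<in>B. 1 + quad_char b)"
    by (simp add: card_square_roots[OF assms])
  finally show ?thesis by (simp add: sum.distrib)
qed

lemma sum_quad_char: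
  assumes "(2::'a::{field,finite}) \<noteq> 0"
  shows "(\<Sum>x\<in>UNIV. quad_char (x::'a)) = 0"
  using sum_quad_char_eq[OF assms, of UNIV] by simp

lemma card_nonsquares:
  assumes "(2::'a::{field,finite}) \<noteq> 0"
  shows "card {x::'a. x \<noteq> 0 \<and> x \<notin> nonzero_squares} = card (nonzero_squares :: 'a set)"
proof -
  have "quad_char x = of_bool (x \<in> nonzero_squares) - of_bool (x \<noteq> 0 \<and> x \<notin> nonzero_squares)"
    for x :: 'a
    by (simp add: quad_char_def nonzero_squares_def)
  then have "(\<Sum>x\<in>UNIV. quad_char (x::'a)) =
      int (card (nonzero_squares :: 'a set)) - int (card {x::'a. x \<noteq> 0 \<and> x \<notin> nonzero_squares})"
    by (simp add: sum_subtractf)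
  with sum_quad_char[OF assms] show ?thesis by simp
qed

(* Multiplication by a non-square maps the squares injectively into the equally many
   non-squares, hence onto them. *)
lemma mult_nonsquares_mem_nonzero_squares:
  fixes a b :: "'a::{field,finite}"
  assumes two: "(2::'a) \<noteq> 0"
    and a: "a \<noteq> 0" "a \<notin> nonzero_squares" and b: "b \<noteq> 0" "b \<notin> nonzero_squares"
  shows "a * b \<in> nonzero_squares"
proof -
  let ?N = "{x::'a. x \<noteq> 0 \<and> x \<notin> nonzero_squares}"
  have "a * s \<in> ?N" if "s \<in> nonzero_squares" for s
  proof -
    have "a * s \<notin> nonzero_squares"
      using a(2) mult_mem_nonzero_squares_iff[OF that, of a] by (simp add: mult.commute)
    moreover have "a * s \<noteq> 0" using a(1) that by (simp add: nonzero_squares_def)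
    ultimately show ?thesis by simp
  qed
  then have "(*) a ` nonzero_squares \<subseteq> ?N" by auto
  moreover have "card ((*) a ` nonzero_squares) = card ?N"
    using card_nonsquares[OF two] a(1) by (simp add: card_image inj_on_def)
  ultimately have "(*) a ` nonzero_squares = ?N" by (intro card_subset_eq) simp_all
  with b have "b \<in> (*) a ` nonzero_squares" by simp
  then obtain s where s: "s \<in> nonzero_squares" "b = a * s" by blast
  then have "a * b = a ^ 2 * s" by (simp add: power2_eq_square mult.assoc)
  also have "\<dots> \<in> nonzero_squares"
    using s(1) a(1) by (intro mult_mem_nonzero_squares square_mem_nonzero_squares)
  finally show ?thesis .
qed

lemma quad_char_mult:
  fixes a b :: "'a::{field,finite}"
  assumes "(2::'a) \<noteq> 0"
  shows "quad_char (a * b) = quad_char a * quad_char b"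
proof (cases "a = 0 \<or> b = 0")
  case False
  then consider "a \<in> nonzero_squares" | "b \<in> nonzero_squares"
    | "a \<notin> nonzero_squares" "b \<notin> nonzero_squares"
    by blast
  then show ?thesis
  proof cases
    case 1
    then show ?thesis using False by (simp add: quad_char_def mult_mem_nonzero_squares_iff)
  next
    case 2
    then show ?thesis
      using False mult_mem_nonzero_squares_iff[OF 2, of a] by (simp add: quad_char_def mult.commute)
  next
    case 3
    then show ?thesis
      using False mult_nonsquares_mem_nonzero_squares[OF assms _ _ _, of a b]
      by (simp add: quad_char_def)
  qed
qed (auto simp: quad_char_def)

(* For u <> 0 the summand is quad_char (1 + d / u), and 1 + d / u runs through all
   elements except 1. *)
lemma sum_quad_char_mult_translate:
  fixes d :: "'a::{field,finite}"
  assumes two: "(2::'a) \<noteq> 0" and "d \<noteq> 0"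
  shows "(\<Sum>u\<in>UNIV. quad_char u * quad_char (u + d)) = -1"
proof -
  have square: "quad_char (u ^ 2) = 1" if "u \<noteq> 0" for u :: 'a
    using that by (simp add: quad_char_def square_mem_nonzero_squares)
  have summand: "quad_char u * quad_char (u + d) = quad_char (1 + d / u)" if "u \<noteq> 0" for u
  proof -
    have "quad_char u * quad_char (u + d) = quad_char (u * (u + d))"
      by (simp add: quad_char_mult[OF two])
    also have "u * (u + d) = u ^ 2 * (1 + d / u)"
      using that by (simp add: field_simps power2_eq_square)
    also have "quad_char \<dots> = quad_char (1 + d / u)"
      using that by (simp add: quad_char_mult[OF two] square)
    finally show ?thesis .
  qed
  have "(\<Sum>u\<in>UNIV. quad_char u * quad_char (u + d)) =
      (\<Sum>u\<in>UNIV - {0}. quad_char u * quad_char (u + d))"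
    by (simp add: sum.remove[of UNIV 0] quad_char_def)
  also have "\<dots> = (\<Sum>u\<in>UNIV - {0}. quad_char (1 + d / u))"
    by (rule sum.cong) (simp_all add: summand)
  also have "\<dots> = (\<Sum>t\<in>UNIV - {1::'a}. quad_char t)"
    by (rule sum.reindex_bij_witness[where j = "\<lambda>u. 1 + d / u" and i = "\<lambda>t. d / (t - 1)"])
      (use \<open>d \<noteq> 0\<close> in simp_all)
  also have "\<dots> = - quad_char (1::'a)"
    using sum.remove[of "UNIV::'a set" 1 quad_char] sum_quad_char[OF two] by simp
  also have "\<dots> = -1"
    using square[of 1] by simp
  finally show ?thesis .
qed

lemma sum_quad_char_consecutive_triple:
  assumes two: "(2::'a::{field,finite}) \<noteq> 0"
  shows "(\<Sum>x\<in>UNIV. (1 + quad_char (x::'a)) * (1 + quad_char (x + 1)) * (1 + quad_char (x - 1))) =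
    int (card (UNIV :: 'a set)) - 3 + (\<Sum>x\<in>UNIV. quad_char (x ^ 3 - x :: 'a))"
proof -
  let ?\<chi> = "quad_char :: 'a \<Rightarrow> int"
  have cube: "?\<chi> x * ?\<chi> (x + 1) * ?\<chi> (x - 1) = ?\<chi> (x ^ 3 - x)" for x
  proof -
    have "x * (x + 1) * (x - 1) = x ^ 3 - x" by (simp add: algebra_simps power3_eq_cube)
    then show ?thesis by (metis quad_char_mult[OF two])
  qed
  have expand: "(1 + ?\<chi> x) * (1 + ?\<chi> (x + 1)) * (1 + ?\<chi> (x - 1)) =
      1 + ?\<chi> x + ?\<chi> (x + 1) + ?\<chi> (x - 1) + ?\<chi> x * ?\<chi> (x + 1) + ?\<chi> x * ?\<chi> (x - 1)
      + ?\<chi> (x + 1) * ?\<chi> (x - 1) + ?\<chi> (x ^ 3 - x)" for x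
    by (simp add: cube[symmetric] ring_distribs)
  have "(\<Sum>x\<in>UNIV. ?\<chi> x) = 0" "(\<Sum>x\<in>UNIV. ?\<chi> (x + 1)) = 0" "(\<Sum>x\<in>UNIV. ?\<chi> (x - 1)) = 0"
    using sum_quad_char[OF two] sum_UNIV_translate[of ?\<chi> 1] sum_UNIV_translate[of ?\<chi> "-1"]
    by simp_all
  moreover have "(\<Sum>x\<in>UNIV. ?\<chi> x * ?\<chi> (x + 1)) = -1" "(\<Sum>x\<in>UNIV. ?\<chi> x * ?\<chi> (x - 1)) = -1"
    using sum_quad_char_mult_translate[OF two, of 1] sum_quad_char_mult_translate[OF two, of "-1"]
    by simp_all
  moreover have "(\<Sum>x\<in>UNIV. ?\<chi> (x + 1) * ?\<chi> (x - 1)) = -1"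
  proof -
    have "(\<Sum>x\<in>UNIV. ?\<chi> (x + 1) * ?\<chi> (x - 1)) = (\<Sum>u\<in>UNIV. ?\<chi> u * ?\<chi> (u + -2))"
      using sum_UNIV_translate[of "\<lambda>u. ?\<chi> u * ?\<chi> (u + -2)" 1] by simp
    also have "\<dots> = -1"
      using two by (intro sum_quad_char_mult_translate[OF two]) simp
    finally show ?thesis .
  qed
  ultimately show ?thesis
    by (simp add: expand sum.distrib)
qed

lemma card_consecutive_nonzero_squares_le:
  assumes two: "(2::'a::{field,finite}) \<noteq> 0"
  shows "8 * int (card {x::'a. x \<in> nonzero_squares \<and> x + 1 \<in> nonzero_squares
      \<and> x - 1 \<in> nonzero_squares}) \<le> int (card (UNIV :: 'a set)) - 3 + (\<Sum>x\<in>UNIV. quad_char (x ^ 3 - x :: 'a))"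
proof -
  let ?N = "{x::'a. x \<in> nonzero_squares \<and> x + 1 \<in> nonzero_squares \<and> x - 1 \<in> nonzero_squares}"
  define f where "f x = (1 + quad_char x) * (1 + quad_char (x + 1)) * (1 + quad_char (x - 1))"
    for x :: 'a
  have "0 \<le> 1 + quad_char x" for x :: 'a by (simp add: quad_char_def)
  then have f_nonneg: "0 \<le> f x" for x by (simp add: f_def)
  have "f x = 8" if "x \<in> ?N" for x
    using that by (simp add: f_def quad_char_def nonzero_squares_def)
  then have "8 * int (card ?N) = (\<Sum>x\<in>?N. f x)" by simp
  also have "\<dots> \<le> (\<Sum>x\<in>UNIV. f x)"
    using f_nonneg by (intro sum_mono2) simp_all
  also have "\<dots> = int (card (UNIV :: 'a set)) - 3 + (\<Sum>x\<in>UNIV. quad_char (x ^ 3 - x :: 'a))"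
    unfolding f_def by (rule sum_quad_char_consecutive_triple[OF two])
  finally show ?thesis .
qed

section \<open>Squares in an additive subgroup of index three\<close>

definition additive_subgroup :: "'a::ab_group_add set \<Rightarrow> bool" where
  "additive_subgroup H \<longleftrightarrow> 0 \<in> H \<and> (\<forall>a\<in>H. \<forall>b\<in>H. a - b \<in> H)"

lemma additive_subgroup_zero: "additive_subgroup H \<Longrightarrow> 0 \<in> H"
  by (simp add: additive_subgroup_def)

lemma additive_subgroup_diff: "additive_subgroup H \<Longrightarrow> a \<in> H \<Longrightarrow> b \<in> H \<Longrightarrow> a - b \<in> H"
  by (simp add: additive_subgroup_def)

lemma additive_subgroup_add: "additive_subgroup H \<Longrightarrow> a \<in> H \<Longrightarrow> b \<in> H \<Longrightarrow> a + b \<in> H"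
  by (metis additive_subgroup_def diff_0 diff_minus_eq_add)

lemma additive_coset_eq_iff:
  assumes "additive_subgroup H"
  shows "{x. x - a \<in> H} = {x. x - b \<in> H} \<longleftrightarrow> a - b \<in> H"
proof
  assume "{x. x - a \<in> H} = {x. x - b \<in> H}"
  moreover have "a \<in> {x. x - a \<in> H}" using assms by (simp add: additive_subgroup_def)
  ultimately show "a - b \<in> H" by blast
next
  assume "a - b \<in> H"
  then have "x - a \<in> H \<longleftrightarrow> x - b \<in> H" for x
    using additive_subgroup_add[OF assms, of "x - a" "a - b"]
      additive_subgroup_diff[OF assms, of "x - b" "a - b"]
    by auto
  then show "{x. x - a \<in> H} = {x. x - b \<in> H}" by blast
qed

lemma card_additive_coset:
  fixes H :: "'a::ab_group_add set"
  shows "card {x. x - w \<in> H} = card H"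
proof -
  have "{x. x - w \<in> H} = (\<lambda>h. h + w) ` H" by (force simp: algebra_simps)
  then show ?thesis by (simp add: card_image inj_on_def)
qed

lemma card_eq_card_additive_cosets_mult:
  fixes H :: "'a::{ab_group_add,finite} set"
  assumes H: "additive_subgroup H"
  shows "card (UNIV :: 'a set) = card (range (\<lambda>w. {x. x - w \<in> H})) * card H"
proof -
  let ?cosets = "range (\<lambda>w. {x. x - w \<in> H})"
  have "card H * card ?cosets = card (\<Union>?cosets)"
  proof (rule card_partition)
    show "\<And>C. C \<in> ?cosets \<Longrightarrow> card C = card H" by (auto simp: card_additive_coset)
    show "C1 \<inter> C2 = {}" if C: "C1 \<in> ?cosets" "C2 \<in> ?cosets" "C1 \<noteq> C2" for C1 C2
    proof (rule ccontr)
      assume "C1 \<inter> C2 \<noteq> {}"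
      then obtain x where "x \<in> C1" "x \<in> C2" by blast
      moreover obtain a b where ab: "C1 = {x. x - a \<in> H}" "C2 = {x. x - b \<in> H}"
        using C(1,2) by blast
      ultimately have "(x - b) - (x - a) \<in> H" using additive_subgroup_diff[OF H] by blast
      then have "C1 = C2" using ab additive_coset_eq_iff[OF H] by simp
      with C(3) show False ..
    qed
  qed simp_all
  moreover have "\<Union>?cosets = UNIV"
    using additive_subgroup_zero[OF H] by auto
  ultimately show ?thesis by (simp add: mult.commute)
qed

lemma card_pairs_diff_squares_mem:
  fixes H :: "'a::{field,finite} set"
  assumes two: "(2::'a) \<noteq> 0"
  shows "card {(y, z). y ^ 2 - z ^ 2 \<in> H} = card {(u, v). u * v \<in> H}"
proof (rule bij_betw_same_card)
  have half: "(a + a) / 2 = a" for a :: 'a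
    using two by (simp flip: mult_2)
  have factor: "y ^ 2 - z ^ 2 = (y - z) * (y + z)" for y z :: 'a
    by (simp add: algebra_simps power2_eq_square)
  have "(y - z + (y + z)) / 2 = y" "(y + z - (y - z)) / 2 = z" for y z :: 'a
    using half[of y] half[of z] by (simp_all add: algebra_simps)
  moreover have "(u + v) / 2 - (v - u) / 2 = u" "(u + v) / 2 + (v - u) / 2 = v" for u v :: 'a
    using half[of u] half[of v] by (simp_all add: algebra_simps diff_divide_distrib[symmetric]
        add_divide_distrib[symmetric])
  ultimately show "bij_betw (\<lambda>(y, z). (y - z, y + z))
      {(y, z). y ^ 2 - z ^ 2 \<in> H} {(u, v). u * v \<in> H}"
    by (intro bij_betw_byWitness[where f' = "\<lambda>(u, v). ((u + v) / 2, (v - u) / 2)"])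
      (auto simp: factor)
qed

lemma card_pairs_mult_mem:
  fixes H :: "'a::{field,finite} set"
  assumes "0 \<in> H"
  shows "card {(u, v). u * v \<in> H} = card (UNIV :: 'a set) + (card (UNIV :: 'a set) - 1) * card H"
proof -
  have fiber: "card {v. u * v \<in> H} = card H" if "u \<noteq> 0" for u :: 'a
  proof -
    have "{v. u * v \<in> H} = (\<lambda>h. h / u) ` H"
      using that by (force simp: field_simps)
    then show ?thesis using that by (simp add: card_image inj_on_def)
  qed
  have "{(u, v). u * v \<in> H} = (SIGMA u:UNIV. {v. u * v \<in> H})" by auto
  then have "card {(u, v). u * v \<in> H} = (\<Sum>u\<in>UNIV. card {v. u * v \<in> H})" by simp
  also have "\<dots> = card {v. 0 * v \<in> H} + (\<Sum>u\<in>UNIV - {0}. card {v. u * v \<in> H})"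
    by (rule sum.remove) simp_all
  also have "\<dots> = card (UNIV :: 'a set) + (card (UNIV :: 'a set) - 1) * card H"
    using assms by (simp add: fiber card_Diff_subset)
  finally show ?thesis .
qed

lemma sq_three_mult_sub_le:
  fixes a b c q :: real
  assumes sum: "a + b + c = q" and sum_squares: "3 * (a ^ 2 + b ^ 2 + c ^ 2) = 3 * q + (q - 1) * q"
  shows "(3 * a - q) ^ 2 \<le> 4 * q"
proof -
  have "(3 * a - q) ^ 2 + 3 * (b - c) ^ 2 = 2 * (3 * (a ^ 2 + b ^ 2 + c ^ 2)) - 2 * q ^ 2"
    unfolding sum[symmetric] by (simp add: power2_eq_square algebra_simps)
  also have "\<dots> = 4 * q"
    unfolding sum_squares by (simp add: power2_eq_square algebra_simps)
  finally show ?thesis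
    using zero_le_power2[of "b - c"] by linarith
qed

(* Both moments count y, resp. pairs (y, z) with y^2 - z^2 : H, according to the cosets of y^2
   and z^2; the pairs are counted a second time through (y, z) |-> (y - z, y + z). *)
lemma card_squares_in_additive_cosets:
  fixes H :: "'a::{field,finite} set"
  assumes two: "(2::'a) \<noteq> 0" and H: "additive_subgroup H"
  shows "(\<Sum>C\<in>range (\<lambda>w. {x. x - w \<in> H}). card {y. y ^ 2 \<in> C}) = card (UNIV :: 'a set)"
    and "(\<Sum>C\<in>range (\<lambda>w. {x. x - w \<in> H}). card {y. y ^ 2 \<in> C} ^ 2) =
      card (UNIV :: 'a set) + (card (UNIV :: 'a set) - 1) * card H"
proof -
  define coset where "coset w = {x. x - w \<in> H}" for w :: 'a
  have count: "card {y. y ^ 2 \<in> C} = card {y. coset (y ^ 2) = C}" if "C \<in> range coset" for C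
    using that additive_coset_eq_iff[OF H] by (auto simp: coset_def)
  have "(\<Sum>C\<in>range coset. card {y. y ^ 2 \<in> C}) = card (UNIV :: 'a set)"
    using card_eq_sum_card_fibers[of "range coset" "\<lambda>y. coset (y ^ 2)"] by (simp add: count)
  then show "(\<Sum>C\<in>range (\<lambda>w. {x. x - w \<in> H}). card {y. y ^ 2 \<in> C}) = card (UNIV :: 'a set)"
    by (simp add: coset_def)
  have "(\<Sum>C\<in>range coset. card {y. y ^ 2 \<in> C} ^ 2) =
      (\<Sum>C\<in>range coset. card {y. coset (y ^ 2) = C} ^ 2)"
    by (intro sum.cong refl) (simp add: count)
  also have "\<dots> = card {(y, z). coset (y ^ 2) = coset (z ^ 2)}"
    by (rule card_pairs_same_image[symmetric]) auto
  also have "\<dots> = card {(y, z). y ^ 2 - z ^ 2 \<in> H}"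
    by (simp add: coset_def additive_coset_eq_iff[OF H])
  also have "\<dots> = card {(u, v). u * v \<in> H}"
    by (rule card_pairs_diff_squares_mem[OF two])
  also have "\<dots> = card (UNIV :: 'a set) + (card (UNIV :: 'a set) - 1) * card H"
    by (rule card_pairs_mult_mem[OF additive_subgroup_zero[OF H]])
  finally show "(\<Sum>C\<in>range (\<lambda>w. {x. x - w \<in> H}). card {y. y ^ 2 \<in> C} ^ 2) =
      card (UNIV :: 'a set) + (card (UNIV :: 'a set) - 1) * card H"
    by (simp add: coset_def)
qed

lemma card_squares_in_index_three_subgroup_bound:
  fixes H :: "'a::{field,finite} set"
  assumes two: "(2::'a) \<noteq> 0" and H: "additive_subgroup H"
    and index: "card (UNIV :: 'a set) = 3 * card H"
  shows "(3 * real (card {y::'a. y ^ 2 \<in> H}) - real (card (UNIV :: 'a set))) ^ 2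
    \<le> 4 * real (card (UNIV :: 'a set))"
proof -
  define q where "q = card (UNIV :: 'a set)"
  define n where "n C = card {y::'a. y ^ 2 \<in> C}" for C
  define cosets where "cosets = range (\<lambda>w. {x. x - w \<in> H})"
  have "H = {x. x - 0 \<in> H}" by simp
  then have "H \<in> cosets" unfolding cosets_def by (rule range_eqI)
  have "card H \<noteq> 0"
    using additive_subgroup_zero[OF H] by (auto simp: card_eq_0_iff)
  then have "card cosets = 3"
    using card_eq_card_additive_cosets_mult[OF H] index by (simp add: cosets_def)
  then have "card (cosets - {H}) = 2"
    using \<open>H \<in> cosets\<close> by simp
  then obtain C1 C2 where C: "cosets - {H} = {C1, C2}" "C1 \<noteq> C2"
    by (auto simp: card_2_iff)
  then have cosets: "cosets = {H, C1, C2}" and "H \<notin> {C1, C2}"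
    using \<open>H \<in> cosets\<close> by auto
  have "(\<Sum>C\<in>{H, C1, C2}. n C) = q" "(\<Sum>C\<in>{H, C1, C2}. n C ^ 2) = q + (q - 1) * card H"
    using card_squares_in_additive_cosets[OF two H, folded cosets_def] unfolding cosets n_def q_def
    by simp_all
  then have sum: "n H + n C1 + n C2 = q" and "n H ^ 2 + n C1 ^ 2 + n C2 ^ 2 = q + (q - 1) * card H"
    using \<open>H \<notin> {C1, C2}\<close> C(2) by (simp_all add: add.assoc)
  then have "3 * (n H ^ 2 + n C1 ^ 2 + n C2 ^ 2) = 3 * q + (q - 1) * q"
    using index by (simp add: q_def algebra_simps)
  moreover have "1 \<le> q" using index \<open>card H \<noteq> 0\<close> unfolding q_def by linarith
  ultimately have sum_squares:
    "3 * (real (n H) ^ 2 + real (n C1) ^ 2 + real (n C2) ^ 2) = 3 * real q + (real q - 1) * real q"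
    by (metis (mono_tags) of_nat_1 of_nat_add of_nat_diff of_nat_mult of_nat_power of_nat_numeral)
  have "real (n H) + real (n C1) + real (n C2) = real q"
    using sum by (metis of_nat_add)
  from sq_three_mult_sub_le[OF this sum_squares] show ?thesis
    by (simp add: n_def q_def)
qed

section \<open>Characteristic three\<close>

lemma two_neq_zero_if_three_eq_zero:
  assumes "(3::'a::field) = 0"
  shows "(2::'a) \<noteq> 0"
proof
  assume "(2::'a) = 0"
  moreover have "(3::'a) = 2 + 1" by simp
  ultimately show False using assms by simp
qed

lemma three_eq_zero_if_card_eq_power_three:
  assumes "card (UNIV :: 'a::{field,finite} set) = 3 ^ m"
  shows "(3::'a) = 0"
  using of_nat_card_UNIV_eq_0[where 'a = 'a] assms by simp

definition artin_schreier :: "'a::field \<Rightarrow> 'a" where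
  "artin_schreier x = x ^ 3 - x"

lemma artin_schreier_diff:
  assumes "(3::'a::field) = 0"
  shows "artin_schreier (x - y) = artin_schreier x - artin_schreier (y::'a)"
proof -
  have "(x - y) ^ 3 = x ^ 3 - y ^ 3 - 3 * x * y * (x - y)"
    by (simp add: algebra_simps power3_eq_cube)
  with assms show ?thesis by (simp add: artin_schreier_def)
qed

lemma artin_schreier_eq_0_iff:
  "artin_schreier x = 0 \<longleftrightarrow> x = 0 \<or> x = 1 \<or> x = (-1::'a::field)"
proof -
  have "artin_schreier x = x * (x - 1) * (x + 1)"
    by (simp add: artin_schreier_def algebra_simps power3_eq_cube)
  then show ?thesis by (auto simp: eq_neg_iff_add_eq_0)
qed

lemma card_artin_schreier_fiber:
  assumes three: "(3::'a::field) = 0"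
  shows "card {y. artin_schreier y = artin_schreier (x::'a)} = 3"
proof -
  have "artin_schreier y = artin_schreier x \<longleftrightarrow> y = x \<or> y = x + 1 \<or> y = x - 1" for y
  proof -
    have "artin_schreier y = artin_schreier x \<longleftrightarrow> artin_schreier (y - x) = 0"
      by (simp add: artin_schreier_diff[OF three])
    also have "\<dots> \<longleftrightarrow> y - x = 0 \<or> y - x = 1 \<or> y - x = -1"
      by (rule artin_schreier_eq_0_iff)
    also have "\<dots> \<longleftrightarrow> y = x \<or> y = x + 1 \<or> y = x - 1"
      by (auto simp: algebra_simps)
    finally show ?thesis .
  qed
  then have "{y. artin_schreier y = artin_schreier x} = {x, x + 1, x - 1}"
    by blast
  moreover have "x + 1 \<noteq> x - 1"
  proof
    assume "x + 1 = x - 1"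
    then have "(2::'a) = 0" by (simp add: algebra_simps)
    with two_neq_zero_if_three_eq_zero[OF three] show False ..
  qed
  ultimately show ?thesis by simp
qed

lemma card_UNIV_eq_three_mult_card_range_artin_schreier:
  assumes "(3::'a::{field,finite}) = 0"
  shows "card (UNIV :: 'a set) = 3 * card (range (artin_schreier :: 'a \<Rightarrow> 'a))"
  by (rule card_eq_card_fiber_mult[OF card_artin_schreier_fiber[OF assms]])

lemma additive_subgroup_range_artin_schreier:
  assumes "(3::'a::field) = 0"
  shows "additive_subgroup (range (artin_schreier :: 'a \<Rightarrow> 'a))"
  unfolding additive_subgroup_def
proof safe
  show "0 \<in> range (artin_schreier :: 'a \<Rightarrow> 'a)"
    using artin_schreier_eq_0_iff[of "0::'a"] by (metis rangeI)
  show "artin_schreier x - artin_schreier y \<in> range artin_schreier" for x y :: 'a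
    by (metis artin_schreier_diff[OF assms] rangeI)
qed

lemma sum_quad_char_artin_schreier:
  assumes three: "(3::'a::{field,finite}) = 0"
  shows "(\<Sum>x\<in>UNIV. quad_char (artin_schreier (x::'a))) =
    3 * int (card {y::'a. y ^ 2 \<in> range artin_schreier}) - int (card (UNIV :: 'a set))"
proof -
  have "(\<Sum>x\<in>UNIV. quad_char (artin_schreier (x::'a))) =
      3 * (\<Sum>h\<in>range artin_schreier. quad_char (h::'a))"
    using sum_comp_eq_card_fiber_mult[OF card_artin_schreier_fiber[OF three]] by simp
  also have "\<dots> = 3 * (int (card {y::'a. y ^ 2 \<in> range artin_schreier})
      - int (card (range (artin_schreier :: 'a \<Rightarrow> 'a))))"
    by (simp add: sum_quad_char_eq[OF two_neq_zero_if_three_eq_zero[OF three]])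
  finally show ?thesis
    by (simp add: card_UNIV_eq_three_mult_card_range_artin_schreier[OF three])
qed

lemma card_consecutive_nonzero_squares_char_three:
  assumes three: "(3::'a::{field,finite}) = 0"
  shows "8 * int (card {x::'a. x \<in> nonzero_squares \<and> x + 1 \<in> nonzero_squares
      \<and> x - 1 \<in> nonzero_squares}) \<le> 3 * int (card {y::'a. y ^ 2 \<in> range artin_schreier}) - 3"
  using card_consecutive_nonzero_squares_le[OF two_neq_zero_if_three_eq_zero[OF three]]
    sum_quad_char_artin_schreier[OF three]
  by (simp add: artin_schreier_def)

theorem lemma5:
  assumes "(m::nat) \<ge> 1"
    and "card (UNIV :: 'a::{field,finite} set) = 3 ^ m"
  shows "real (card {x :: 'a. x \<noteq> 0 \<and> x \<in> nonzero_squares \<and> x + 1 \<in> nonzero_squares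
                    \<and> x - 1 \<in> nonzero_squares})
         \<le> (real (card (UNIV :: 'a set)) + 2 * sqrt (real (card (UNIV :: 'a set))) + 9) / 8"
proof -
  have three: "(3::'a) = 0" by (rule three_eq_zero_if_card_eq_power_three[OF assms(2)])
  let ?N = "{x::'a. x \<in> nonzero_squares \<and> x + 1 \<in> nonzero_squares \<and> x - 1 \<in> nonzero_squares}"
  define q where "q = real (card (UNIV :: 'a set))"
  define s where "s = real (card {y::'a. y ^ 2 \<in> range artin_schreier})"
  have "(3 * s - q) ^ 2 \<le> 4 * q"
    unfolding s_def q_def
    by (rule card_squares_in_index_three_subgroup_bound[OF two_neq_zero_if_three_eq_zero[OF three]
          additive_subgroup_range_artin_schreier[OF three]
          card_UNIV_eq_three_mult_card_range_artin_schreier[OF three]])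
  then have "3 * s - q \<le> 2 * sqrt q"
    using real_le_rsqrt[of "3 * s - q" "4 * q"] by (simp add: real_sqrt_mult)
  moreover have "real_of_int (8 * int (card ?N)) \<le>
      real_of_int (3 * int (card {y::'a. y ^ 2 \<in> range artin_schreier}) - 3)"
    unfolding of_int_le_iff by (rule card_consecutive_nonzero_squares_char_three[OF three])
  moreover have "{x :: 'a. x \<noteq> 0 \<and> x \<in> nonzero_squares \<and> x + 1 \<in> nonzero_squares
      \<and> x - 1 \<in> nonzero_squares} = ?N"
    by (auto simp: nonzero_squares_def)
  ultimately show ?thesis unfolding q_def s_def by simp
qed

end
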